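(* Let $A$ be a finite abelian group with $|A|=n$, and let $T$ be an $A$-cordial tree with $nk$ vertices for some $k\in\mathbb{N}$. If $T^*$ is a tree containing $T$ as an induced subgraph and $|V(T^* )|\le nk+\lfloor n/2\rfloor+1$, then $T^*$ is $A$-cordial.
   Context: $\mathbb{N}=\mathbb{Z}_{\ge0}$. Graphs are finite, simple and undirected. For an abelian group $A$ and a graph $G=(V,E)$, a vertex labeling $\ell:V\to A$ induces an edge labeling $\ell(\{v_1,v_2\})=\ell(v_1)+\ell(v_2)$. Let $f_V(a)=|\{v\in V:\ell(v)=a\}|$ and $f_E(a)=|\{e\in E:\ell(e)=a\}|$. The labeling is $A$-cordial if $|f_V(a_1)-f_V(a_2)|\le 1$ and $|f_E(a_1)-f_E(a_2)|\le 1$ for all $a_1,a_2\in A$; $G$ is $A$-cordial if it admits an $A$-cordial labeling. *)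

theory Defs
  imports Main
begin

definition simple_graph :: "'v set \<Rightarrow> 'v set set \<Rightarrow> bool" where
  "simple_graph V E \<longleftrightarrow> finite V \<and> (\<forall>e\<in>E. \<exists>u v. e = {u, v} \<and> u \<noteq> v \<and> u \<in> V \<and> v \<in> V)"

definition adj :: "'v set set \<Rightarrow> 'v \<Rightarrow> 'v \<Rightarrow> bool" where
  "adj E u v \<longleftrightarrow> {u, v} \<in> E"

definition is_walk :: "'v set set \<Rightarrow> 'v list \<Rightarrow> bool" where
  "is_walk E xs \<longleftrightarrow> xs \<noteq> [] \<and> (\<forall>i. Suc i < length xs \<longrightarrow> adj E (xs ! i) (xs ! Suc i))"

definition connected_graph :: "'v set \<Rightarrow> 'v set set \<Rightarrow> bool" where
  "connected_graph V E \<longleftrightarrow>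
     (\<forall>u\<in>V. \<forall>v\<in>V. \<exists>xs. is_walk E xs \<and> set xs \<subseteq> V \<and> hd xs = u \<and> last xs = v)"

definition has_cycle :: "'v set set \<Rightarrow> bool" where
  "has_cycle E \<longleftrightarrow> (\<exists>xs. length xs \<ge> 3 \<and> distinct xs \<and> is_walk E xs \<and> adj E (last xs) (hd xs))"

definition is_tree :: "'v set \<Rightarrow> 'v set set \<Rightarrow> bool" where
  "is_tree V E \<longleftrightarrow> simple_graph V E \<and> V \<noteq> {} \<and> connected_graph V E \<and> \<not> has_cycle E"

definition induced_subgraph :: "'v set \<Rightarrow> 'v set set \<Rightarrow> 'v set \<Rightarrow> 'v set set \<Rightarrow> bool" where
  "induced_subgraph V E V' E' \<longleftrightarrow> V \<subseteq> V' \<and> E = {e \<in> E'. e \<subseteq> V}"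

definition vcount :: "'v set \<Rightarrow> ('v \<Rightarrow> 'a) \<Rightarrow> 'a \<Rightarrow> nat" where
  "vcount V l a = card {v \<in> V. l v = a}"

definition ecount :: "'v set set \<Rightarrow> ('v \<Rightarrow> 'a::plus) \<Rightarrow> 'a \<Rightarrow> nat" where
  "ecount E l a = card {e \<in> E. \<exists>u v. e = {u, v} \<and> u \<noteq> v \<and> l u + l v = a}"

definition cordial_labeling :: "'v set \<Rightarrow> 'v set set \<Rightarrow> ('v \<Rightarrow> 'a::{ab_group_add,finite}) \<Rightarrow> bool" where
  "cordial_labeling V E l \<longleftrightarrow>
     (\<forall>a1 a2. \<bar>int (vcount V l a1) - int (vcount V l a2)\<bar> \<le> 1) \<and>
     (\<forall>a1 a2. \<bar>int (ecount E l a1) - int (ecount E l a2)\<bar> \<le> 1)"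

text \<open>G is A-cordial, where the abelian group A is the type 'a.\<close>
definition cordial :: "'a::{ab_group_add,finite} itself \<Rightarrow> 'v set \<Rightarrow> 'v set set \<Rightarrow> bool" where
  "cordial _ V E \<longleftrightarrow> (\<exists>l :: 'v \<Rightarrow> 'a. cordial_labeling V E l)"

end

theory Submission
  imports Defs
begin

text \<open>A cordial labelling of a tree with \<open>nk\<close> vertices uses every vertex label exactly \<open>k\<close>
  times and every edge label \<open>k\<close> times, except for one label \<open>c\<close> that is used \<open>k - 1\<close> times.
  Grow \<open>T\<close> to \<open>T\<^sup>*\<close> one leaf at a time. A new leaf \<open>w\<close> attached to \<open>p\<close> gets a label \<open>x\<close> that
  is a least used vertex label and such that \<open>x + l(p)\<close> is a least used edge label; this keeps the
  labelling cordial. With \<open>nk + j\<close> vertices there are \<open>n - j\<close> least used vertex labels, and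
  \<open>1\<close> (for \<open>j = 0\<close>) or \<open>n - j + 1\<close> (for \<open>j \<ge> 1\<close>) least used edge labels, so as long as
  \<open>2j \<le> n\<close> the two constraints on \<open>x\<close> can be met simultaneously by pigeonhole.\<close>

lemma adj_commute: "adj E u v \<longleftrightarrow> adj E v u"
  by (simp add: adj_def insert_commute)

lemma is_walk_singleton [simp]: "is_walk E [x]"
  by (simp add: is_walk_def)

lemma is_walk_Cons_Cons: "is_walk E (x # y # ys) \<longleftrightarrow> adj E x y \<and> is_walk E (y # ys)"
  unfolding is_walk_def by (auto simp: All_less_Suc2)

lemma is_walk_Cons: "ys \<noteq> [] \<Longrightarrow> is_walk E (x # ys) \<longleftrightarrow> adj E x (hd ys) \<and> is_walk E ys"
  by (cases ys) (auto simp: is_walk_Cons_Cons)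

lemma is_walk_appendD: "is_walk E (ys @ zs) \<Longrightarrow> zs \<noteq> [] \<Longrightarrow> is_walk E zs"
  by (induction ys) (auto simp: is_walk_Cons)

lemma is_walk_snoc: "is_walk E xs \<Longrightarrow> adj E (last xs) w \<Longrightarrow> is_walk E (xs @ [w])"
  by (induction xs rule: induct_list012) (auto simp: is_walk_Cons_Cons)

lemma is_walk_mono: "is_walk E xs \<Longrightarrow> E \<subseteq> F \<Longrightarrow> is_walk F xs"
  unfolding is_walk_def adj_def by blast

lemma is_walk_remdups:
  assumes "is_walk E xs"
  obtains ys where "is_walk E ys" "distinct ys" "set ys \<subseteq> set xs" "hd ys = hd xs" "last ys = last xs"
  using assms
proof (induction xs arbitrary: thesis rule: induct_list012)
  case 1
  then show ?case by (simp add: is_walk_def)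
next
  case (2 x)
  show ?case by (rule "2.prems"(1)[of "[x]"]) auto
next
  case (3 x y zs)
  then obtain ys where ys: "is_walk E ys" "distinct ys" "set ys \<subseteq> set (y # zs)" "hd ys = y"
      "last ys = last (y # zs)"
    by (auto simp: is_walk_Cons_Cons)
  have "ys \<noteq> []" using ys(1) by (auto simp: is_walk_def)
  show ?case
  proof (cases "x \<in> set ys")
    case True
    then obtain ys1 ys2 where split: "ys = ys1 @ x # ys2" by (meson split_list)
    show ?thesis
      by (rule "3.prems"(1)[of "x # ys2"])
        (use ys split is_walk_appendD[of E ys1 "x # ys2"] in \<open>auto simp: last_append split: if_splits\<close>)
  next
    case False
    show ?thesis
      by (rule "3.prems"(1)[of "x # ys"])
        (use ys False \<open>ys \<noteq> []\<close> "3.prems"(2) in \<open>auto simp: is_walk_Cons is_walk_Cons_Cons\<close>)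
  qed
qed

lemma is_walk_exit_edge:
  assumes "is_walk E xs" "hd xs \<in> S" "last xs \<notin> S"
  shows "\<exists>u v. u \<in> S \<and> v \<in> set xs - S \<and> adj E u v"
  using assms
proof (induction xs rule: induct_list012)
  case (3 x y zs)
  then show ?case by (cases "y \<in> S") (auto simp: is_walk_Cons_Cons)
qed (auto simp: is_walk_def)

lemma connected_graph_mono: "connected_graph V E \<Longrightarrow> E \<subseteq> F \<Longrightarrow> connected_graph V F"
  unfolding connected_graph_def by (meson is_walk_mono)

lemma connected_graph_insert:
  assumes conn: "connected_graph S E" and p: "p \<in> S" and wp: "adj E w p"
  shows "connected_graph (insert w S) E"
  unfolding connected_graph_def
proof (intro ballI)
  fix u v assume u: "u \<in> insert w S" and v: "v \<in> insert w S"
  have walk: "\<exists>xs. is_walk E xs \<and> set xs \<subseteq> S \<and> hd xs = a \<and> last xs = b" if "a \<in> S" "b \<in> S" for a b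
    using conn that unfolding connected_graph_def by blast
  consider "u = w" "v = w" | "u = w" "v \<in> S" | "u \<in> S" "v = w" | "u \<in> S" "v \<in> S"
    using u v by blast
  then show "\<exists>xs. is_walk E xs \<and> set xs \<subseteq> insert w S \<and> hd xs = u \<and> last xs = v"
  proof cases
    case 1
    then show ?thesis by (intro exI[of _ "[w]"]) simp
  next
    case 2
    then obtain xs where "is_walk E xs" "set xs \<subseteq> S" "hd xs = p" "last xs = v"
      using walk p by blast
    moreover from this have "xs \<noteq> []" by (simp add: is_walk_def)
    ultimately show ?thesis
      using 2 wp by (intro exI[of _ "w # xs"]) (auto simp: is_walk_Cons)
  next
    case 3
    then obtain xs where "is_walk E xs" "set xs \<subseteq> S" "hd xs = u" "last xs = p"
      using walk p by blast
    moreover from this have "xs \<noteq> []" by (simp add: is_walk_def)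
    ultimately show ?thesis
      using 3 wp by (intro exI[of _ "xs @ [w]"]) (auto simp: is_walk_snoc adj_commute)
  next
    case 4
    then show ?thesis using walk by blast
  qed
qed

lemma acyclic_unique_neighbour:
  assumes acyclic: "\<not> has_cycle E" and conn: "connected_graph S E" and "w \<notin> S" "p \<in> S" "q \<in> S"
    and wp: "adj E w p" and wq: "adj E w q"
  shows "q = p"
proof (rule ccontr)
  assume "q \<noteq> p"
  obtain xs where "is_walk E xs" "set xs \<subseteq> S" "hd xs = p" "last xs = q"
    using conn \<open>p \<in> S\<close> \<open>q \<in> S\<close> unfolding connected_graph_def by blast
  then obtain ys where ys: "is_walk E ys" "distinct ys" "set ys \<subseteq> S" "hd ys = p" "last ys = q"
    by (metis is_walk_remdups subset_trans)
  have "ys \<noteq> []" using ys(1) by (simp add: is_walk_def)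
  then have "length ys \<ge> 2" using ys(4,5) \<open>q \<noteq> p\<close> by (cases ys; cases "tl ys") auto
  moreover have "is_walk E (w # ys)" using ys(1,4) wp \<open>ys \<noteq> []\<close> by (simp add: is_walk_Cons)
  moreover have "distinct (w # ys)" using ys(2,3) \<open>w \<notin> S\<close> by auto
  moreover have "adj E (last (w # ys)) (hd (w # ys))"
    using ys(5) wq \<open>ys \<noteq> []\<close> by (simp add: adj_commute)
  ultimately have "has_cycle E"
    unfolding has_cycle_def by (metis Suc_le_mono length_Cons numeral_3_eq_3 numeral_2_eq_2)
  with acyclic show False ..
qed

lemma tree_attach_vertex:
  assumes tree: "is_tree V E" and "S \<subseteq> V" "S \<noteq> {}" and conn: "connected_graph S E" and "S \<noteq> V"
  obtains w p where "w \<in> V - S" "p \<in> S" "adj E w p" "\<forall>q\<in>S. adj E w q \<longrightarrow> q = p"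
    "connected_graph (insert w S) E"
proof -
  obtain s t where "s \<in> S" "t \<in> V - S" using assms by blast
  then obtain xs where "is_walk E xs" "set xs \<subseteq> V" "hd xs = s" "last xs = t"
    using tree \<open>S \<subseteq> V\<close> unfolding is_tree_def connected_graph_def by blast
  then obtain p w where "p \<in> S" "w \<in> V - S" "adj E w p"
    using is_walk_exit_edge[of E xs S] \<open>s \<in> S\<close> \<open>t \<in> V - S\<close> by (auto simp: adj_commute)
  moreover have "\<not> has_cycle E" using tree by (simp add: is_tree_def)
  then have "\<forall>q\<in>S. adj E w q \<longrightarrow> q = p"
    using acyclic_unique_neighbour[OF _ conn] \<open>w \<in> V - S\<close> \<open>p \<in> S\<close> \<open>adj E w p\<close> by blast
  ultimately show thesis
    using that connected_graph_insert[OF conn \<open>p \<in> S\<close> \<open>adj E w p\<close>] by blast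
qed

definition induced_edges :: "'v set set \<Rightarrow> 'v set \<Rightarrow> 'v set set" where
  "induced_edges E S = {e \<in> E. e \<subseteq> S}"

lemma simple_graph_edgeE:
  assumes "simple_graph V E" "e \<in> E"
  obtains u v where "e = {u, v}" "u \<noteq> v" "u \<in> V" "v \<in> V"
  using assms unfolding simple_graph_def by blast

lemma simple_graph_edge_subset: "simple_graph V E \<Longrightarrow> e \<in> E \<Longrightarrow> e \<subseteq> V"
  by (elim simple_graph_edgeE) auto

lemma finite_edges: "simple_graph V E \<Longrightarrow> finite E"
  by (meson PowI finite_Pow_iff rev_finite_subset simple_graph_def simple_graph_edge_subset subsetI)

lemma induced_edges_self: "simple_graph V E \<Longrightarrow> induced_edges E V = E"
  unfolding induced_edges_def by (blast dest: simple_graph_edge_subset)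

lemma simple_graph_induced_edges:
  assumes "simple_graph V E" "S \<subseteq> V"
  shows "simple_graph S (induced_edges E S)"
  unfolding simple_graph_def
proof (intro conjI ballI)
  show "finite S" using assms(1) rev_finite_subset[OF _ assms(2)] by (simp add: simple_graph_def)
  fix e assume "e \<in> induced_edges E S"
  then have "e \<in> E" "e \<subseteq> S" by (simp_all add: induced_edges_def)
  obtain u v where "e = {u, v}" "u \<noteq> v" "u \<in> V" "v \<in> V"
    by (rule simple_graph_edgeE[OF assms(1) \<open>e \<in> E\<close>])
  with \<open>e \<subseteq> S\<close> show "\<exists>u v. e = {u, v} \<and> u \<noteq> v \<and> u \<in> S \<and> v \<in> S" by auto
qed

lemma induced_edges_insert_leaf:
  assumes "simple_graph V E" "p \<in> S" "adj E w p" and unique: "\<forall>q\<in>S. adj E w q \<longrightarrow> q = p"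
  shows "induced_edges E (insert w S) = insert {w, p} (induced_edges E S)"
proof (intro equalityI subsetI)
  fix e assume e: "e \<in> induced_edges E (insert w S)"
  then have "e \<in> E" by (simp add: induced_edges_def)
  obtain u v where uv: "e = {u, v}" "u \<noteq> v" "u \<in> V" "v \<in> V"
    by (rule simple_graph_edgeE[OF assms(1) \<open>e \<in> E\<close>])
  show "e \<in> insert {w, p} (induced_edges E S)"
  proof (cases "w \<in> e")
    case False
    then show ?thesis using e by (auto simp: induced_edges_def)
  next
    case True
    then obtain q where q: "e = {w, q}" "q \<noteq> w" using uv by auto
    then have "q \<in> S" "adj E w q" using e by (auto simp: induced_edges_def adj_def)
    then show ?thesis using unique q(1) by simp
  qed
next
  fix e assume "e \<in> insert {w, p} (induced_edges E S)"
  with assms(2,3) show "e \<in> induced_edges E (insert w S)"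
    unfolding induced_edges_def adj_def by blast
qed

lemma card_induced_edges_insert_leaf:
  assumes "finite E" "w \<notin> S" "induced_edges E (insert w S) = insert {w, p} (induced_edges E S)"
  shows "card (induced_edges E (insert w S)) = card (induced_edges E S) + 1"
proof -
  have "{w, p} \<notin> induced_edges E S" using assms(2) by (auto simp: induced_edges_def)
  with assms show ?thesis by (simp add: induced_edges_def)
qed

lemma tree_grow_induct:
  assumes tree: "is_tree V E" and "S0 \<subseteq> V" "S0 \<noteq> {}" "connected_graph S0 E" and "P S0"
    and step: "\<And>S w p. S0 \<subseteq> S \<Longrightarrow> S \<subseteq> V \<Longrightarrow> P S \<Longrightarrow> w \<in> V - S \<Longrightarrow> p \<in> S \<Longrightarrow>
      induced_edges E (insert w S) = insert {w, p} (induced_edges E S) \<Longrightarrow> P (insert w S)"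
  shows "P V"
proof -
  have sg: "simple_graph V E" using tree by (simp add: is_tree_def)
  have "P V" if "S0 \<subseteq> S" "S \<subseteq> V" "connected_graph S E" "P S" for S
    using that
  proof (induction "card (V - S)" arbitrary: S rule: less_induct)
    case less
    show ?case
    proof (cases "S = V")
      case True
      with less show ?thesis by simp
    next
      case False
      obtain w p where w: "w \<in> V - S" "p \<in> S" "adj E w p" "\<forall>q\<in>S. adj E w q \<longrightarrow> q = p"
        "connected_graph (insert w S) E"
        using tree_attach_vertex[OF tree less.prems(2) _ less.prems(3) False] less.prems(1) \<open>S0 \<noteq> {}\<close>
        by blast
      have "finite V" using sg by (simp add: simple_graph_def)
      with w(1) have "card (V - insert w S) < card (V - S)"
        by (metis Diff_insert card_Diff1_less finite_Diff)
      moreover have "P (insert w S)"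
        using step[OF less.prems(1,2,4) w(1,2) induced_edges_insert_leaf[OF sg w(2-4)]] .
      ultimately show ?thesis using less w by blast
    qed
  qed
  then show ?thesis using assms by blast
qed

lemma tree_card_edges:
  assumes tree: "is_tree V E"
  shows "card E + 1 = card V"
proof -
  have sg: "simple_graph V E" using tree by (simp add: is_tree_def)
  obtain v where "v \<in> V" using tree by (auto simp: is_tree_def)
  have "card (induced_edges E V) + 1 = card V"
  proof (rule tree_grow_induct[OF tree, of "{v}"])
    show "connected_graph {v} E" unfolding connected_graph_def by (auto intro: exI[of _ "[v]"])
    have "induced_edges E {v} = {}"
      using sg unfolding simple_graph_def induced_edges_def by fastforce
    then show "card (induced_edges E {v}) + 1 = card {v}" by simp
  next
    fix S w p assume "S \<subseteq> V" "card (induced_edges E S) + 1 = card S" "w \<in> V - S"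
      "induced_edges E (insert w S) = insert {w, p} (induced_edges E S)"
    moreover have "finite S" using \<open>S \<subseteq> V\<close> sg finite_subset by (auto simp: simple_graph_def)
    ultimately show "card (induced_edges E (insert w S)) + 1 = card (insert w S)"
      using card_induced_edges_insert_leaf[OF finite_edges[OF sg]] by simp
  qed (use \<open>v \<in> V\<close> in auto)
  then show ?thesis using induced_edges_self[OF sg] by simp
qed

definition balanced :: "('a \<Rightarrow> nat) \<Rightarrow> bool" where
  "balanced f \<longleftrightarrow> (\<forall>a b. f a \<le> f b + 1)"

lemma cordial_labeling_iff_balanced:
  "cordial_labeling V E l \<longleftrightarrow> balanced (vcount V l) \<and> balanced (ecount E l)"
proof -
  have "\<bar>int x - int y\<bar> \<le> 1 \<longleftrightarrow> x \<le> y + 1 \<and> y \<le> x + 1" for x y :: nat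
    by arith
  then show ?thesis unfolding cordial_labeling_def balanced_def by blast
qed

lemma balanced_increment_minimum:
  assumes "balanced f" "\<forall>b. f x \<le> f b"
  shows "balanced (\<lambda>a. f a + (if x = a then 1 else 0))"
  using assms unfolding balanced_def by (simp add: le_SucI)

lemma card_minima_balanced:
  fixes f :: "'a::finite \<Rightarrow> nat"
  assumes bal: "balanced f" and total: "sum f UNIV = card (UNIV :: 'a set) * k + r"
    and "r < card (UNIV :: 'a set)"
  shows "card {a. \<forall>b. f a \<le> f b} = card (UNIV :: 'a set) - r"
proof -
  let ?N = "card (UNIV :: 'a set)"
  obtain a0 where a0: "\<forall>b. f a0 \<le> f b" using ex_has_least_nat[of "\<lambda>_. True" _ f] by blast
  define m where "m = f a0"
  have two_values: "f a = m \<or> f a = m + 1" for a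
  proof -
    have "m \<le> f a" "f a \<le> m + 1" using a0 bal unfolding m_def balanced_def by auto
    then show ?thesis by linarith
  qed
  have minima: "{a. \<forall>b. f a \<le> f b} = UNIV - {a. f a \<noteq> m}"
  proof (intro set_eqI iffI)
    fix a assume "a \<in> {a. \<forall>b. f a \<le> f b}"
    then have "f a \<le> m" unfolding m_def by simp
    with a0 show "a \<in> UNIV - {a. f a \<noteq> m}" unfolding m_def by (simp add: antisym)
  qed (use a0 m_def in simp)
  define t where "t = card {a. f a \<noteq> m}"
  have "sum f UNIV = (\<Sum>a\<in>UNIV. m + (if f a \<noteq> m then 1 else 0))"
    using two_values by (intro sum.cong) auto
  also have "\<dots> = ?N * m + t"
    unfolding t_def by (simp add: sum.distrib sum.If_cases)
  finally have eq: "?N * m + t = ?N * k + r" using total by simp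
  have "t < ?N"
    unfolding t_def m_def by (rule psubset_card_mono) auto
  then have "t = (?N * m + t) mod ?N" by simp
  also have "\<dots> = r" using eq \<open>r < ?N\<close> by simp
  finally show ?thesis unfolding minima t_def by (simp add: card_Diff_subset)
qed

lemma exists_translate_in:
  fixes A B :: "'a::{ab_group_add,finite} set"
  assumes "card (UNIV :: 'a set) < card A + card B"
  obtains x where "x \<in> A" "x + c \<in> B"
proof -
  let ?B' = "(\<lambda>b. b - c) ` B"
  have "card ?B' = card B" by (simp add: card_image inj_on_def)
  have "A \<inter> ?B' \<noteq> {}"
  proof
    assume "A \<inter> ?B' = {}"
    then have "card (A \<union> ?B') = card A + card B"
      using \<open>card ?B' = card B\<close> by (simp add: card_Un_disjoint)
    moreover have "card (A \<union> ?B') \<le> card (UNIV :: 'a set)" by (simp add: card_mono)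
    ultimately show False using assms by simp
  qed
  then obtain b where "b \<in> B" "b - c \<in> A" by blast
  then show thesis using that[of "b - c"] by simp
qed

lemma vcount_cong: "(\<And>v. v \<in> S \<Longrightarrow> f v = g v) \<Longrightarrow> vcount S f = vcount S g"
  unfolding vcount_def by (intro ext arg_cong[where f = card] Collect_cong) auto

lemma vcount_insert:
  assumes "finite S" "v \<notin> S"
  shows "vcount (insert v S) f a = vcount S f a + (if f v = a then 1 else 0)"
proof -
  have "{u \<in> insert v S. f u = a} = (if f v = a then insert v {u \<in> S. f u = a} else {u \<in> S. f u = a})"
    by auto
  then show ?thesis using assms by (simp add: vcount_def)
qed

lemma sum_vcount:
  fixes f :: "'v \<Rightarrow> 'a::finite"
  assumes "finite S"
  shows "(\<Sum>a\<in>UNIV. vcount S f a) = card S"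
  using sum.group[OF assms finite_UNIV subset_UNIV, where g = f and h = "\<lambda>_. 1 :: nat"]
  by (simp add: vcount_def flip: card_eq_sum)

lemma ecount_eq_vcount_sum:
  fixes l :: "'v \<Rightarrow> 'a::comm_monoid_add"
  assumes "\<forall>e\<in>F. card e = 2"
  shows "ecount F l a = vcount F (sum l) a"
  unfolding ecount_def vcount_def
proof (intro arg_cong[where f = card] Collect_cong conj_cong refl)
  fix e assume "e \<in> F"
  then obtain u v where e: "e = {u, v}" "u \<noteq> v" using assms card_2_iff by metis
  then show "(\<exists>u v. e = {u, v} \<and> u \<noteq> v \<and> l u + l v = a) \<longleftrightarrow> sum l e = a"
    by (auto simp: doubleton_eq_iff add.commute)
qed

lemma simple_graph_card_edge: "simple_graph V E \<Longrightarrow> e \<in> E \<Longrightarrow> card e = 2"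
  by (elim simple_graph_edgeE) auto

lemma sum_ecount:
  fixes l :: "'v \<Rightarrow> 'a::{comm_monoid_add,finite}"
  shows "simple_graph V E \<Longrightarrow> (\<Sum>a\<in>UNIV. ecount E l a) = card E"
proof -
  assume sg: "simple_graph V E"
  then have "ecount E l = vcount E (sum l)"
    by (intro ext ecount_eq_vcount_sum) (simp add: simple_graph_card_edge)
  then show ?thesis using sum_vcount[OF finite_edges[OF sg]] by simp
qed

lemma ecount_insert_leaf:
  fixes l :: "'v \<Rightarrow> 'a::comm_monoid_add"
  assumes sg: "simple_graph S F" and "w \<notin> S" "p \<in> S"
  shows "ecount (insert {w, p} F) (l(w := x)) a = ecount F l a + (if x + l p = a then 1 else 0)"
proof -
  have "w \<noteq> p" using assms by auto
  have "\<forall>e\<in>insert {w, p} F. card e = 2"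
    using \<open>w \<noteq> p\<close> simple_graph_card_edge[OF sg] by auto
  then have "ecount (insert {w, p} F) (l(w := x)) a = vcount (insert {w, p} F) (sum (l(w := x))) a"
    by (rule ecount_eq_vcount_sum)
  also have "\<dots> = vcount F (sum (l(w := x))) a + (if x + l p = a then 1 else 0)"
    using \<open>w \<noteq> p\<close> \<open>w \<notin> S\<close> simple_graph_edge_subset[OF sg] finite_edges[OF sg]
    by (subst vcount_insert) auto
  also have "vcount F (sum (l(w := x))) = vcount F (sum l)"
    using \<open>w \<notin> S\<close> simple_graph_edge_subset[OF sg]
    by (intro vcount_cong sum.cong) auto
  also have "vcount F (sum l) a = ecount F l a"
    using simple_graph_card_edge[OF sg] by (simp add: ecount_eq_vcount_sum)
  finally show ?thesis .
qed

lemma cordial_labeling_add_leaf: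
  fixes l :: "'v \<Rightarrow> 'a::{ab_group_add,finite}"
  assumes cordial: "cordial_labeling S F l" and sg: "simple_graph S F" and "w \<notin> S" "p \<in> S"
    and vmin: "\<forall>b. vcount S l x \<le> vcount S l b"
    and emin: "\<forall>b. ecount F l (x + l p) \<le> ecount F l b"
  shows "cordial_labeling (insert w S) (insert {w, p} F) (l(w := x))"
proof -
  have "finite S" using sg by (simp add: simple_graph_def)
  have "vcount (insert w S) (l(w := x)) = (\<lambda>a. vcount S l a + (if x = a then 1 else 0))"
  proof
    fix a
    have "vcount S (l(w := x)) = vcount S l" using \<open>w \<notin> S\<close> by (intro vcount_cong) auto
    then show "vcount (insert w S) (l(w := x)) a = vcount S l a + (if x = a then 1 else 0)"
      using vcount_insert[OF \<open>finite S\<close> \<open>w \<notin> S\<close>, of "l(w := x)" a] by simp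
  qed
  moreover have "ecount (insert {w, p} F) (l(w := x)) =
      (\<lambda>a. ecount F l a + (if x + l p = a then 1 else 0))"
    using ecount_insert_leaf[OF sg \<open>w \<notin> S\<close> \<open>p \<in> S\<close>] by blast
  ultimately show ?thesis
    using cordial vmin emin balanced_increment_minimum
    unfolding cordial_labeling_iff_balanced by metis
qed

lemma cordial_add_leaf:
  fixes S :: "'v set"
  assumes "cordial TYPE('a::{ab_group_add,finite}) S F" and sg: "simple_graph S F"
    and edges: "card F + 1 = card S" and "card (UNIV :: 'a set) * k \<le> card S"
    and "card S \<le> card (UNIV :: 'a set) * k + card (UNIV :: 'a set) div 2" and "w \<notin> S" "p \<in> S"
  shows "cordial TYPE('a) (insert w S) (insert {w, p} F)"
proof -
  obtain l :: "'v \<Rightarrow> 'a" where cordial: "cordial_labeling S F l"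
    using assms(1) unfolding cordial_def by blast
  let ?N = "card (UNIV :: 'a set)"
  define j where "j = card S - ?N * k"
  have vertices: "card S = ?N * k + j" and small: "2 * j \<le> ?N"
    using assms(4,5) unfolding j_def by auto
  let ?Vmin = "{a. \<forall>b. vcount S l a \<le> vcount S l b}"
  let ?Emin = "{a. \<forall>b. ecount F l a \<le> ecount F l b}"
  have "finite S" using sg by (simp add: simple_graph_def)
  have "?N > 0" by (simp add: finite_UNIV_card_ge_0)
  with small have "j < ?N" by linarith
  have bal: "balanced (vcount S l)" "balanced (ecount F l)"
    using cordial by (simp_all add: cordial_labeling_iff_balanced)
  have vmin: "card ?Vmin = ?N - j"
    using card_minima_balanced[OF bal(1) _ \<open>j < ?N\<close>] sum_vcount[OF \<open>finite S\<close>, of l] vertices by simp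
  have "?N < card ?Vmin + card ?Emin"
  proof (cases "j = 0")
    case True
    with vertices \<open>p \<in> S\<close> \<open>finite S\<close> have "k \<ge> 1" by (cases k) auto
    then have "sum (ecount F l) UNIV = ?N * (k - 1) + (?N - 1)"
      using sum_ecount[OF sg, of l] edges vertices True \<open>?N > 0\<close> by (cases k) auto
    then have "card ?Emin = ?N - (?N - 1)"
      by (rule card_minima_balanced[OF bal(2)]) (use \<open>?N > 0\<close> in simp)
    with True vmin \<open>?N > 0\<close> show ?thesis by simp
  next
    case False
    then have "sum (ecount F l) UNIV = ?N * k + (j - 1)"
      using sum_ecount[OF sg, of l] edges vertices by simp
    then have "card ?Emin = ?N - (j - 1)"
      by (rule card_minima_balanced[OF bal(2)]) (use \<open>j < ?N\<close> in simp)
    with False small vmin show ?thesis by simp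
  qed
  then obtain x where "x \<in> ?Vmin" "x + l p \<in> ?Emin"
    by (rule exists_translate_in)
  then show ?thesis
    using cordial_labeling_add_leaf[OF cordial sg \<open>w \<notin> S\<close> \<open>p \<in> S\<close>] unfolding cordial_def by blast
qed

lemma cordial_grow_induced_subtree:
  fixes S0 :: "'v set"
  assumes tree: "is_tree V E" and "S0 \<subseteq> V" "S0 \<noteq> {}" "connected_graph S0 E"
    and "card (induced_edges E S0) + 1 = card S0"
    and "cordial TYPE('a::{ab_group_add,finite}) S0 (induced_edges E S0)"
    and "card (UNIV :: 'a set) * k \<le> card S0"
    and "card V \<le> card (UNIV :: 'a set) * k + card (UNIV :: 'a set) div 2 + 1"
  shows "cordial TYPE('a) V E"
proof -
  have sg: "simple_graph V E" using tree by (simp add: is_tree_def)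
  then have "finite V" by (simp add: simple_graph_def)
  have "card (induced_edges E V) + 1 = card V \<and> cordial TYPE('a) V (induced_edges E V)"
  proof (rule tree_grow_induct[OF tree \<open>S0 \<subseteq> V\<close> \<open>S0 \<noteq> {}\<close> \<open>connected_graph S0 E\<close>])
    fix S w p
    assume "S0 \<subseteq> S" "S \<subseteq> V" "w \<in> V - S" "p \<in> S"
      and IH: "card (induced_edges E S) + 1 = card S \<and> cordial TYPE('a) S (induced_edges E S)"
      and grow: "induced_edges E (insert w S) = insert {w, p} (induced_edges E S)"
    have "finite S" using \<open>S \<subseteq> V\<close> \<open>finite V\<close> by (rule finite_subset)
    have sgS: "simple_graph S (induced_edges E S)" using sg \<open>S \<subseteq> V\<close> by (rule simple_graph_induced_edges)
    have "card S0 \<le> card S" using \<open>finite S\<close> \<open>S0 \<subseteq> S\<close> by (rule card_mono)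
    moreover have "card S < card V"
      using \<open>finite V\<close> \<open>S \<subseteq> V\<close> \<open>w \<in> V - S\<close> by (intro psubset_card_mono) auto
    ultimately have "cordial TYPE('a) (insert w S) (insert {w, p} (induced_edges E S))"
      using IH assms(7,8) \<open>w \<in> V - S\<close> \<open>p \<in> S\<close> by (intro cordial_add_leaf[OF _ sgS, where k = k]) auto
    then show "card (induced_edges E (insert w S)) + 1 = card (insert w S)
        \<and> cordial TYPE('a) (insert w S) (induced_edges E (insert w S))"
      using IH grow card_induced_edges_insert_leaf[OF finite_edges[OF sg] _ grow] \<open>w \<in> V - S\<close>
        \<open>finite S\<close> by simp
  qed (use assms in auto)
  then show ?thesis using induced_edges_self[OF sg] by simp
qed

theorem lemma4p1:
  fixes V :: "'v set" and E :: "'v set set" and V' :: "'v set" and E' :: "'v set set" and k :: nat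
  assumes "is_tree V E"
    and "cordial TYPE('a::{ab_group_add,finite}) V E"
    and "card V = card (UNIV :: 'a set) * k"
    and "is_tree V' E'"
    and "induced_subgraph V E V' E'"
    and "card V' \<le> card (UNIV :: 'a set) * k + card (UNIV :: 'a set) div 2 + 1"
  shows "cordial TYPE('a) V' E'"
proof (rule cordial_grow_induced_subtree[OF assms(4)])
  have E: "E = induced_edges E' V"
    using assms(5) unfolding induced_subgraph_def induced_edges_def by auto
  show "V \<subseteq> V'" using assms(5) by (simp add: induced_subgraph_def)
  show "V \<noteq> {}" using assms(1) by (simp add: is_tree_def)
  show "connected_graph V E'"
    using assms(1) E connected_graph_mono unfolding is_tree_def induced_edges_def by blast
  show "card (induced_edges E' V) + 1 = card V" using tree_card_edges[OF assms(1)] E by simp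
  show "cordial TYPE('a) V (induced_edges E' V)" using assms(2) E by simp
qed (use assms(3,6) in auto)

end
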